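(* Let $P=\langle \mathit{Init}(X),\mathit{Tr}(X,X'),\mathit{Bad}(X)\rangle$ be a safety problem over $\mathcal{T}$, let $Q_i$ be a frame, and let $\langle m,\xi,i+1\rangle$ be a proof obligation. Suppose $M$ is a model with $M\models \mathit{qi}(Q_i)\wedge \mathit{Tr}\wedge m'_{\mathit{sk}}$. Let $(\varphi,U)=\textsc{pMbp}(X'\cup\mathit{SK},\ \mathit{Tr}\wedge m'_{\mathit{sk}},\ M)$ and $(\psi,\sigma)=\mathit{abs}(U,\varphi)$ (so that $\langle \psi,\sigma,i\rangle$ is the proof obligation produced by the Predecessor rule). Then $$(\exists\psi)\ \Rightarrow\ \exists X'\cdot\big(\mathit{Tr}\wedge \exists m'\big).$$
   Context: $\mathcal{T}$ is the combined first-order theory of linear integer arithmetic and arrays, with sorts $\mathsf{int}$ and $\mathsf{array}$ (array indices and values have sort $\mathsf{int}$; $\mathsf{sel}$, $\mathit{store}$ are array read/write). Formulas may contain uninterpreted constants; among them are Skolem constants $\mathit{SK}=\{sk_i: i\in\mathbb{N}\}$ of sort $\mathsf{int}$. Variables of sort $\mathsf{int}$ are named $v_i$ ($i\in\mathbb N$). A substitution is a partial sort-respecting map from variables to terms; $\varphi\sigma$ is its application. The Skolem substitution $\mathit{sk}$ maps $v_i\mapsto sk_i$, and $L_{\mathit{sk}}$ denotes $L\,\mathit{sk}$. $\mathit{Const}(\varphi)$, $\mathit{FVars}(\varphi)$ denote the uninterpreted constants and free variables of $\varphi$; $\forall\varphi$ / $\exists\varphi$ denote universal / existential closure over all free variables;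 $\varphi\Rightarrow\psi$ means $\varphi\to\psi$ is valid in $\mathcal{T}$; for a set $Y$ of constants, $\exists Y\cdot\varphi$ existentially quantifies the constants of $Y$ (treating them as variables). For a set $U$ of constants and a formula $\varphi$, $\mathit{abs}(U,\varphi)=(\psi,\sigma)$ is an abstraction: $\psi$ is obtained from $\varphi$ by replacing each constant of $U$ by a variable not free in $\varphi$, where each $sk_i\in U$ is replaced by $v_i$; $\sigma$ has $\mathit{dom}(\sigma)=\mathit{FVars}(\psi)\setminus\mathit{FVars}(\varphi)$ and maps these variables back, so $\psi\sigma=\varphi$ and no constant of $U$ occurs in $\psi$. For ground $\varphi$, $\exists U\cdot\varphi$ also denotes $\exists\psi$ with $(\psi,\_)=\mathit{abs}(U,\varphi)$. A partial model-based projection $\textsc{pMbp}$ takes a ground formula $\varphi$, a model $M\models\varphi$ and $U\subseteq\mathit{Const}(\varphi)$ and returns $(\psi,W)$ such that: $\psi$ is a conjunction of ground literals; $W\subseteq U$ and $\mathit{Const}(\psi)\subseteq\mathit{Const}(\varphi)\setminus(U\setminus W)$; $\psi\Rightarrow\exists (U\setminus W)\cdot\varphi$; $M\models\psi$; for fixed $U,\varphi$ the set $\{\textsc{pMbp}(U,\varphi,M)\mid M\models\varphi\}$ is finite; and $W$ contains no constant of sort $\mathsf{array}$. A safety problem $\langle \mathit{Init}(X),\mathit{Tr}(X,X'),\mathit{Bad}(X)\rangle$ consists of a finite set $X$ of uninterpreted constants disjoint from $\mathit{SK}$, its primed copy $X'=\{a'\mid a\in X\}$, and quantifier-free ground formulas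 $\mathit{Init},\mathit{Bad}$ over $X$ and $\mathit{Tr}$ over $X\cup X'$. For a formula $\varphi$ over $X$ (possibly with free variables), $\varphi'$ is obtained by replacing each $a\in X$ by $a'$. A frame $Q$ is a finite set of pairs $(\ell,\sigma)$ where $\ell$ is a quantifier-free formula over $X$ whose free variables have sort $\mathsf{int}$ and $\sigma$ is a substitution with $\mathit{FVars}(\ell)\subseteq\mathit{dom}(\sigma)$ and range in $X'\cup\mathit{SK}$; $\mathit{qi}(Q)$ is the conjunction of all $\ell\sigma$ for $(\ell,\sigma)\in Q$. A proof obligation $\langle m,\xi,j\rangle$ consists of a conjunction $m$ of literals over $X$ whose free variables have sort $\mathsf{int}$, a substitution $\xi$ with $m\xi$ ground, and $j\in\mathbb N$. *)

theory Defs
  imports Main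
begin

datatype srt = SInt | SArr

text \<open>Uninterpreted constants: Skolem constants sk_i (sort int), named base constants
  with a sort, and primed copies a' of constants.\<close>
datatype const = Sk nat | Cn string srt | Pr const

fun srt_of :: "const \<Rightarrow> srt" where
  "srt_of (Sk i) = SInt"
| "srt_of (Cn s t) = t"
| "srt_of (Pr c) = srt_of c"

fun is_Cn :: "const \<Rightarrow> bool" where
  "is_Cn (Cn s t) = True"
| "is_Cn _ = False"

datatype itrm = IVar nat | ICst const | INum int | IAdd itrm itrm | INeg itrm
  | IMul int itrm | Sel atrm itrm
and atrm = ACst const | Store atrm itrm itrm

datatype fm = FTrue | FFalse | ILe itrm itrm | IEq itrm itrm | IDvd int itrm
  | AEq atrm atrm | Neg fm | Conj fm fm | Disj fm fm

section \<open>Semantics (T-models: standard integers, arrays as total functions int => int)\<close>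

type_synonym interp = "(const \<Rightarrow> int) \<times> (const \<Rightarrow> int \<Rightarrow> int)"
type_synonym valuation = "nat \<Rightarrow> int"

primrec evi :: "interp \<Rightarrow> valuation \<Rightarrow> itrm \<Rightarrow> int"
  and eva :: "interp \<Rightarrow> valuation \<Rightarrow> atrm \<Rightarrow> (int \<Rightarrow> int)" where
  "evi M v (IVar n) = v n"
| "evi M v (ICst c) = fst M c"
| "evi M v (INum k) = k"
| "evi M v (IAdd s t) = evi M v s + evi M v t"
| "evi M v (INeg s) = - evi M v s"
| "evi M v (IMul k s) = k * evi M v s"
| "evi M v (Sel a s) = eva M v a (evi M v s)"
| "eva M v (ACst c) = snd M c"
| "eva M v (Store a s t) = (\<lambda>j. if j = evi M v s then evi M v t else eva M v a j)"

primrec fsem :: "interp \<Rightarrow> valuation \<Rightarrow> fm \<Rightarrow> bool" where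
  "fsem M v FTrue = True"
| "fsem M v FFalse = False"
| "fsem M v (ILe s t) = (evi M v s \<le> evi M v t)"
| "fsem M v (IEq s t) = (evi M v s = evi M v t)"
| "fsem M v (IDvd k s) = (k dvd evi M v s)"
| "fsem M v (AEq a b) = (eva M v a = eva M v b)"
| "fsem M v (Neg f) = (\<not> fsem M v f)"
| "fsem M v (Conj f g) = (fsem M v f \<and> fsem M v g)"
| "fsem M v (Disj f g) = (fsem M v f \<or> fsem M v g)"

text \<open>M |= phi (for ground phi the valuation is irrelevant).\<close>
definition models :: "interp \<Rightarrow> fm \<Rightarrow> bool" where
  "models M f \<longleftrightarrow> (\<forall>v. fsem M v f)"

type_synonym sem = "interp \<Rightarrow> valuation \<Rightarrow> bool"

definition sem :: "fm \<Rightarrow> sem" where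
  "sem f = (\<lambda>M v. fsem M v f)"

definition valid_imp :: "sem \<Rightarrow> sem \<Rightarrow> bool" where
  "valid_imp P Q \<longleftrightarrow> (\<forall>M v. P M v \<longrightarrow> Q M v)"

definition agree_off :: "const set \<Rightarrow> interp \<Rightarrow> interp \<Rightarrow> bool" where
  "agree_off Y M M' \<longleftrightarrow> (\<forall>c. c \<notin> Y \<longrightarrow> fst M c = fst M' c \<and> snd M c = snd M' c)"

definition ex_consts :: "const set \<Rightarrow> sem \<Rightarrow> sem" where
  "ex_consts Y P = (\<lambda>M v. \<exists>M'. agree_off Y M M' \<and> P M' v)"

definition ex_close :: "fm \<Rightarrow> sem" where
  "ex_close f = (\<lambda>M v. \<exists>v'. fsem M v' f)"

primrec cs_i :: "itrm \<Rightarrow> const set" and cs_a :: "atrm \<Rightarrow> const set" where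
  "cs_i (IVar n) = {}"
| "cs_i (ICst c) = {c}"
| "cs_i (INum k) = {}"
| "cs_i (IAdd s t) = cs_i s \<union> cs_i t"
| "cs_i (INeg s) = cs_i s"
| "cs_i (IMul k s) = cs_i s"
| "cs_i (Sel a s) = cs_a a \<union> cs_i s"
| "cs_a (ACst c) = {c}"
| "cs_a (Store a s t) = cs_a a \<union> cs_i s \<union> cs_i t"

primrec fconsts :: "fm \<Rightarrow> const set" where
  "fconsts FTrue = {}"
| "fconsts FFalse = {}"
| "fconsts (ILe s t) = cs_i s \<union> cs_i t"
| "fconsts (IEq s t) = cs_i s \<union> cs_i t"
| "fconsts (IDvd k s) = cs_i s"
| "fconsts (AEq a b) = cs_a a \<union> cs_a b"
| "fconsts (Neg f) = fconsts f"
| "fconsts (Conj f g) = fconsts f \<union> fconsts g"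
| "fconsts (Disj f g) = fconsts f \<union> fconsts g"

primrec fv_i :: "itrm \<Rightarrow> nat set" and fv_a :: "atrm \<Rightarrow> nat set" where
  "fv_i (IVar n) = {n}"
| "fv_i (ICst c) = {}"
| "fv_i (INum k) = {}"
| "fv_i (IAdd s t) = fv_i s \<union> fv_i t"
| "fv_i (INeg s) = fv_i s"
| "fv_i (IMul k s) = fv_i s"
| "fv_i (Sel a s) = fv_a a \<union> fv_i s"
| "fv_a (ACst c) = {}"
| "fv_a (Store a s t) = fv_a a \<union> fv_i s \<union> fv_i t"

primrec fvars :: "fm \<Rightarrow> nat set" where
  "fvars FTrue = {}"
| "fvars FFalse = {}"
| "fvars (ILe s t) = fv_i s \<union> fv_i t"
| "fvars (IEq s t) = fv_i s \<union> fv_i t"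
| "fvars (IDvd k s) = fv_i s"
| "fvars (AEq a b) = fv_a a \<union> fv_a b"
| "fvars (Neg f) = fvars f"
| "fvars (Conj f g) = fvars f \<union> fvars g"
| "fvars (Disj f g) = fvars f \<union> fvars g"

definition ground :: "fm \<Rightarrow> bool" where
  "ground f \<longleftrightarrow> fvars f = {}"

primrec wf_i :: "itrm \<Rightarrow> bool" and wf_a :: "atrm \<Rightarrow> bool" where
  "wf_i (IVar n) = True"
| "wf_i (ICst c) = (srt_of c = SInt)"
| "wf_i (INum k) = True"
| "wf_i (IAdd s t) = (wf_i s \<and> wf_i t)"
| "wf_i (INeg s) = wf_i s"
| "wf_i (IMul k s) = wf_i s"
| "wf_i (Sel a s) = (wf_a a \<and> wf_i s)"
| "wf_a (ACst c) = (srt_of c = SArr)"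
| "wf_a (Store a s t) = (wf_a a \<and> wf_i s \<and> wf_i t)"

primrec wf :: "fm \<Rightarrow> bool" where
  "wf FTrue = True"
| "wf FFalse = True"
| "wf (ILe s t) = (wf_i s \<and> wf_i t)"
| "wf (IEq s t) = (wf_i s \<and> wf_i t)"
| "wf (IDvd k s) = wf_i s"
| "wf (AEq a b) = (wf_a a \<and> wf_a b)"
| "wf (Neg f) = wf f"
| "wf (Conj f g) = (wf f \<and> wf g)"
| "wf (Disj f g) = (wf f \<and> wf g)"

fun is_atom :: "fm \<Rightarrow> bool" where
  "is_atom (ILe s t) = True"
| "is_atom (IEq s t) = True"
| "is_atom (IDvd k s) = True"
| "is_atom (AEq a b) = True"
| "is_atom FTrue = True"
| "is_atom FFalse = True"
| "is_atom _ = False"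

fun is_literal :: "fm \<Rightarrow> bool" where
  "is_literal (Neg f) = is_atom f"
| "is_literal f = is_atom f"

text \<open>Conjunction of literals (FTrue is the empty conjunction).\<close>
fun conj_lits :: "fm \<Rightarrow> bool" where
  "conj_lits (Conj f g) = (conj_lits f \<and> conj_lits g)"
| "conj_lits f = is_literal f"

type_synonym subst = "nat \<rightharpoonup> itrm"

primrec subst_i :: "subst \<Rightarrow> itrm \<Rightarrow> itrm" and subst_a :: "subst \<Rightarrow> atrm \<Rightarrow> atrm" where
  "subst_i \<sigma> (IVar n) = (case \<sigma> n of None \<Rightarrow> IVar n | Some t \<Rightarrow> t)"
| "subst_i \<sigma> (ICst c) = ICst c"
| "subst_i \<sigma> (INum k) = INum k"
| "subst_i \<sigma> (IAdd s t) = IAdd (subst_i \<sigma> s) (subst_i \<sigma> t)"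
| "subst_i \<sigma> (INeg s) = INeg (subst_i \<sigma> s)"
| "subst_i \<sigma> (IMul k s) = IMul k (subst_i \<sigma> s)"
| "subst_i \<sigma> (Sel a s) = Sel (subst_a \<sigma> a) (subst_i \<sigma> s)"
| "subst_a \<sigma> (ACst c) = ACst c"
| "subst_a \<sigma> (Store a s t) = Store (subst_a \<sigma> a) (subst_i \<sigma> s) (subst_i \<sigma> t)"

primrec subst :: "subst \<Rightarrow> fm \<Rightarrow> fm" where
  "subst \<sigma> FTrue = FTrue"
| "subst \<sigma> FFalse = FFalse"
| "subst \<sigma> (ILe s t) = ILe (subst_i \<sigma> s) (subst_i \<sigma> t)"
| "subst \<sigma> (IEq s t) = IEq (subst_i \<sigma> s) (subst_i \<sigma> t)"
| "subst \<sigma> (IDvd k s) = IDvd k (subst_i \<sigma> s)"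
| "subst \<sigma> (AEq a b) = AEq (subst_a \<sigma> a) (subst_a \<sigma> b)"
| "subst \<sigma> (Neg f) = Neg (subst \<sigma> f)"
| "subst \<sigma> (Conj f g) = Conj (subst \<sigma> f) (subst \<sigma> g)"
| "subst \<sigma> (Disj f g) = Disj (subst \<sigma> f) (subst \<sigma> g)"

definition sk :: subst where
  "sk = (\<lambda>i. Some (ICst (Sk i)))"

primrec cmap_i :: "(const \<Rightarrow> const) \<Rightarrow> itrm \<Rightarrow> itrm"
  and cmap_a :: "(const \<Rightarrow> const) \<Rightarrow> atrm \<Rightarrow> atrm" where
  "cmap_i r (IVar n) = IVar n"
| "cmap_i r (ICst c) = ICst (r c)"
| "cmap_i r (INum k) = INum k"
| "cmap_i r (IAdd s t) = IAdd (cmap_i r s) (cmap_i r t)"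
| "cmap_i r (INeg s) = INeg (cmap_i r s)"
| "cmap_i r (IMul k s) = IMul k (cmap_i r s)"
| "cmap_i r (Sel a s) = Sel (cmap_a r a) (cmap_i r s)"
| "cmap_a r (ACst c) = ACst (r c)"
| "cmap_a r (Store a s t) = Store (cmap_a r a) (cmap_i r s) (cmap_i r t)"

primrec cmap :: "(const \<Rightarrow> const) \<Rightarrow> fm \<Rightarrow> fm" where
  "cmap r FTrue = FTrue"
| "cmap r FFalse = FFalse"
| "cmap r (ILe s t) = ILe (cmap_i r s) (cmap_i r t)"
| "cmap r (IEq s t) = IEq (cmap_i r s) (cmap_i r t)"
| "cmap r (IDvd k s) = IDvd k (cmap_i r s)"
| "cmap r (AEq a b) = AEq (cmap_a r a) (cmap_a r b)"
| "cmap r (Neg f) = Neg (cmap r f)"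
| "cmap r (Conj f g) = Conj (cmap r f) (cmap r g)"
| "cmap r (Disj f g) = Disj (cmap r f) (cmap r g)"

definition prime :: "const set \<Rightarrow> fm \<Rightarrow> fm" where
  "prime X f = cmap (\<lambda>c. if c \<in> X then Pr c else c) f"

primrec abst_i :: "const set \<Rightarrow> (const \<Rightarrow> nat) \<Rightarrow> itrm \<Rightarrow> itrm"
  and abst_a :: "const set \<Rightarrow> (const \<Rightarrow> nat) \<Rightarrow> atrm \<Rightarrow> atrm" where
  "abst_i U r (IVar n) = IVar n"
| "abst_i U r (ICst c) = (if c \<in> U then IVar (r c) else ICst c)"
| "abst_i U r (INum k) = INum k"
| "abst_i U r (IAdd s t) = IAdd (abst_i U r s) (abst_i U r t)"
| "abst_i U r (INeg s) = INeg (abst_i U r s)"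
| "abst_i U r (IMul k s) = IMul k (abst_i U r s)"
| "abst_i U r (Sel a s) = Sel (abst_a U r a) (abst_i U r s)"
| "abst_a U r (ACst c) = ACst c"
| "abst_a U r (Store a s t) = Store (abst_a U r a) (abst_i U r s) (abst_i U r t)"

primrec abst :: "const set \<Rightarrow> (const \<Rightarrow> nat) \<Rightarrow> fm \<Rightarrow> fm" where
  "abst U r FTrue = FTrue"
| "abst U r FFalse = FFalse"
| "abst U r (ILe s t) = ILe (abst_i U r s) (abst_i U r t)"
| "abst U r (IEq s t) = IEq (abst_i U r s) (abst_i U r t)"
| "abst U r (IDvd k s) = IDvd k (abst_i U r s)"
| "abst U r (AEq a b) = AEq (abst_a U r a) (abst_a U r b)"
| "abst U r (Neg f) = Neg (abst U r f)"
| "abst U r (Conj f g) = Conj (abst U r f) (abst U r g)"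
| "abst U r (Disj f g) = Disj (abst U r f) (abst U r g)"

definition is_abs :: "const set \<Rightarrow> fm \<Rightarrow> fm \<Rightarrow> subst \<Rightarrow> bool" where
  "is_abs U \<phi> \<psi> \<sigma> \<longleftrightarrow>
     (\<exists>r. inj_on r U \<and> (\<forall>c\<in>U. r c \<notin> fvars \<phi>) \<and> (\<forall>i. Sk i \<in> U \<longrightarrow> r (Sk i) = i)
        \<and> \<psi> = abst U r \<phi>)
     \<and> dom \<sigma> = fvars \<psi> - fvars \<phi> \<and> subst \<sigma> \<psi> = \<phi> \<and> fconsts \<psi> \<inter> U = {}"

definition is_pMbp :: "(const set \<Rightarrow> fm \<Rightarrow> interp \<Rightarrow> fm \<times> const set) \<Rightarrow> bool" where
  "is_pMbp pmbp \<longleftrightarrow>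
    (\<forall>U \<phi> M. ground \<phi> \<and> wf \<phi> \<and> models M \<phi> \<longrightarrow>
       (case pmbp U \<phi> M of (\<psi>, W) \<Rightarrow>
          conj_lits \<psi> \<and> ground \<psi> \<and> wf \<psi> \<and> W \<subseteq> U
          \<and> fconsts \<psi> \<subseteq> fconsts \<phi> - (U - W)
          \<and> valid_imp (sem \<psi>) (ex_consts (U - W) (sem \<phi>))
          \<and> models M \<psi>
          \<and> (\<forall>c\<in>W. srt_of c \<noteq> SArr)))
    \<and> (\<forall>U \<phi>. ground \<phi> \<and> wf \<phi> \<longrightarrow> finite {pmbp U \<phi> M | M. models M \<phi>})"

definition SK :: "const set" where
  "SK = range Sk"

definition safety_problem :: "const set \<Rightarrow> fm \<Rightarrow> fm \<Rightarrow> fm \<Rightarrow> bool" where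
  "safety_problem X Init Tr Bad \<longleftrightarrow>
     finite X \<and> (\<forall>a\<in>X. is_Cn a)
     \<and> ground Init \<and> wf Init \<and> fconsts Init \<subseteq> X
     \<and> ground Tr \<and> wf Tr \<and> fconsts Tr \<subseteq> X \<union> Pr ` X
     \<and> ground Bad \<and> wf Bad \<and> fconsts Bad \<subseteq> X"

definition is_frame :: "const set \<Rightarrow> (fm \<times> subst) set \<Rightarrow> bool" where
  "is_frame X Q \<longleftrightarrow> finite Q \<and>
     (\<forall>(l, \<sigma>) \<in> Q. wf l \<and> fconsts l \<subseteq> X \<and> fvars l \<subseteq> dom \<sigma>
        \<and> (\<forall>t \<in> ran \<sigma>. \<exists>c \<in> Pr ` X \<union> SK. srt_of c = SInt \<and> t = ICst c))"

definition models_qi :: "interp \<Rightarrow> (fm \<times> subst) set \<Rightarrow> bool" where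
  "models_qi M Q \<longleftrightarrow> (\<forall>(l, \<sigma>) \<in> Q. models M (subst \<sigma> l))"

definition proof_obligation :: "const set \<Rightarrow> fm \<Rightarrow> subst \<Rightarrow> bool" where
  "proof_obligation X m \<xi> \<longleftrightarrow> conj_lits m \<and> wf m \<and> fconsts m \<subseteq> X
     \<and> (\<forall>t \<in> ran \<xi>. wf_i t) \<and> ground (subst \<xi> m)"

end

theory Submission
  imports Defs
begin

(* A model of \<exists>\<psi> is turned into a model of \<phi> by interpreting the abstracted constants U
   through the witnessing valuation. Soundness of pMbp then yields values for the
   constants of (X' \<union> SK) - U making Tr \<and> m'_sk true; so altogether only X' \<union> SK has
   been changed. The Skolem constants occur neither in Tr nor in m', so their values
   may be undone again, serving instead as a valuation witnessing \<exists>m'. *)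

lemma valid_imp_trans [trans]: "valid_imp P Q \<Longrightarrow> valid_imp Q R \<Longrightarrow> valid_imp P R"
  unfolding valid_imp_def by blast

lemma evi_eva_agree_off:
  "agree_off Y M M' \<Longrightarrow> cs_i t \<inter> Y = {} \<Longrightarrow> evi M v t = evi M' v t"
  "agree_off Y M M' \<Longrightarrow> cs_a a \<inter> Y = {} \<Longrightarrow> eva M v a = eva M' v a"
  by (induct t and a) (auto simp: agree_off_def Int_Un_distrib2)

lemma fsem_agree_off:
  "agree_off Y M M' \<Longrightarrow> fconsts f \<inter> Y = {} \<Longrightarrow> fsem M v f = fsem M' v f"
  by (induct f) (auto simp: evi_eva_agree_off Int_Un_distrib2)

lemma evi_eva_cong_vars:
  "(\<And>n. n \<in> fv_i t \<Longrightarrow> v n = v' n) \<Longrightarrow> evi M v t = evi M v' t"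
  "(\<And>n. n \<in> fv_a a \<Longrightarrow> v n = v' n) \<Longrightarrow> eva M v a = eva M v' a"
  by (induct t and a) auto

lemma fsem_cong_vars:
  "(\<And>n. n \<in> fvars f \<Longrightarrow> v n = v' n) \<Longrightarrow> fsem M v f = fsem M v' f"
  by (induct f) (auto cong: evi_eva_cong_vars)

lemma ground_fsem_valuation: "ground f \<Longrightarrow> fsem M v f = fsem M v' f"
  unfolding ground_def by (rule fsem_cong_vars) simp

lemma evi_eva_subst_sk:
  "evi M v (subst_i sk t) = evi M (\<lambda>i. fst M (Sk i)) t"
  "eva M v (subst_a sk a) = eva M (\<lambda>i. fst M (Sk i)) a"
  by (induct t and a) (auto simp: sk_def)

lemma fsem_subst_sk: "fsem M v (subst sk f) = fsem M (\<lambda>i. fst M (Sk i)) f"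
  by (induct f) (auto simp: evi_eva_subst_sk)

lemma fvars_subst_sk: "fvars (subst sk f) = {}"
proof -
  have "fv_i (subst_i sk t) = {}" "fv_a (subst_a sk a) = {}" for t a
    by (induct t and a) (auto simp: sk_def)
  then show ?thesis by (induct f) auto
qed

lemma wf_subst_sk: "wf f \<Longrightarrow> wf (subst sk f)"
proof -
  have "wf_i t \<Longrightarrow> wf_i (subst_i sk t)" "wf_a a \<Longrightarrow> wf_a (subst_a sk a)" for t a
    by (induct t and a) (auto simp: sk_def)
  then show "wf f \<Longrightarrow> wf (subst sk f)" by (induct f) auto
qed

lemma cmap_subst_sk:
  assumes "\<And>i. r (Sk i) = Sk i"
  shows "cmap r (subst sk f) = subst sk (cmap r f)"
proof -
  have "cmap_i r (subst_i sk t) = subst_i sk (cmap_i r t)"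
       "cmap_a r (subst_a sk a) = subst_a sk (cmap_a r a)" for t a
    by (induct t and a) (auto simp: sk_def assms)
  then show ?thesis by (induct f) auto
qed

lemma fconsts_cmap: "fconsts (cmap r f) = r ` fconsts f"
proof -
  have "cs_i (cmap_i r t) = r ` cs_i t" "cs_a (cmap_a r a) = r ` cs_a a" for t a
    by (induct t and a) auto
  then show ?thesis by (induct f) (auto simp: image_Un)
qed

lemma fvars_cmap: "fvars (cmap r f) = fvars f"
proof -
  have "fv_i (cmap_i r t) = fv_i t" "fv_a (cmap_a r a) = fv_a a" for t a
    by (induct t and a) auto
  then show ?thesis by (induct f) auto
qed

lemma wf_cmap:
  assumes "\<And>c. srt_of (r c) = srt_of c"
  shows "wf (cmap r f) = wf f"
proof -
  have "wf_i (cmap_i r t) = wf_i t" "wf_a (cmap_a r a) = wf_a a" for t a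
    by (induct t and a) (auto simp: assms)
  then show ?thesis by (induct f) auto
qed

lemma prime_subst_sk: "SK \<inter> X = {} \<Longrightarrow> prime X (subst sk f) = subst sk (prime X f)"
  unfolding prime_def SK_def by (rule cmap_subst_sk) auto

lemma fconsts_prime: "fconsts f \<subseteq> X \<Longrightarrow> fconsts (prime X f) \<subseteq> Pr ` X"
  unfolding prime_def fconsts_cmap by auto

lemma fvars_prime: "fvars (prime X f) = fvars f"
  unfolding prime_def by (rule fvars_cmap)

lemma wf_prime: "wf (prime X f) = wf f"
  unfolding prime_def by (rule wf_cmap) simp

lemma evi_eva_abst:
  "evi N v (abst_i U r t) = evi (\<lambda>c. if c \<in> U then v (r c) else fst N c, snd N) v t"
  "eva N v (abst_a U r a) = eva (\<lambda>c. if c \<in> U then v (r c) else fst N c, snd N) v a"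
  by (induct t and a) auto

lemma fsem_abst:
  "fsem N v (abst U r f) = fsem (\<lambda>c. if c \<in> U then v (r c) else fst N c, snd N) v f"
  by (induct f) (auto simp: evi_eva_abst)

lemma ex_consts_mono: "valid_imp P Q \<Longrightarrow> valid_imp (ex_consts Y P) (ex_consts Y Q)"
  unfolding valid_imp_def ex_consts_def by blast

lemma ex_consts_Un: "ex_consts (A \<union> B) P = ex_consts A (ex_consts B P)"
proof (intro ext iffI)
  fix M v
  assume "ex_consts (A \<union> B) P M v"
  then obtain M' where M': "agree_off (A \<union> B) M M'" "P M' v"
    unfolding ex_consts_def by blast
  define M'' where "M'' = ((\<lambda>c. if c \<in> A then fst M' c else fst M c),
                           (\<lambda>c. if c \<in> A then snd M' c else snd M c))"
  have "agree_off A M M''" "agree_off B M'' M'"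
    using M'(1) unfolding agree_off_def M''_def by auto
  with M'(2) show "ex_consts A (ex_consts B P) M v"
    unfolding ex_consts_def by blast
next
  fix M v
  assume "ex_consts A (ex_consts B P) M v"
  then obtain M' M'' where "agree_off A M M'" "agree_off B M' M''" "P M'' v"
    unfolding ex_consts_def by blast
  then show "ex_consts (A \<union> B) P M v"
    unfolding ex_consts_def agree_off_def by (metis UnCI)
qed

lemma ex_close_abs:
  assumes "is_abs U \<phi> \<psi> \<sigma>" and "ground \<phi>"
  shows "valid_imp (ex_close \<psi>) (ex_consts U (sem \<phi>))"
  unfolding valid_imp_def
proof (intro allI impI)
  fix N v
  assume "ex_close \<psi> N v"
  then obtain v' where "fsem N v' \<psi>"
    unfolding ex_close_def by blast
  moreover obtain r where "\<psi> = abst U r \<phi>"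
    using assms(1) unfolding is_abs_def by blast
  ultimately have "fsem (\<lambda>c. if c \<in> U then v' (r c) else fst N c, snd N) v' \<phi>"
    by (simp add: fsem_abst)
  then have "fsem (\<lambda>c. if c \<in> U then v' (r c) else fst N c, snd N) v \<phi>"
    using ground_fsem_valuation[OF assms(2)] by blast
  moreover have "agree_off U N (\<lambda>c. if c \<in> U then v' (r c) else fst N c, snd N)"
    unfolding agree_off_def by simp
  ultimately show "ex_consts U (sem \<phi>) N v"
    unfolding ex_consts_def sem_def by blast
qed

lemma ex_consts_SK_subst_sk:
  assumes "fconsts g \<inter> SK = {}" and "fconsts h \<inter> SK = {}"
  shows "valid_imp (ex_consts SK (sem (Conj g (subst sk h))))
           (\<lambda>M v. fsem M v g \<and> ex_close h M v)"
  unfolding valid_imp_def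
proof (intro allI impI)
  fix M v
  assume "ex_consts SK (sem (Conj g (subst sk h))) M v"
  then obtain M' where M': "agree_off SK M M'" "fsem M' v g"
      "fsem M' (\<lambda>i. fst M' (Sk i)) h"
    unfolding ex_consts_def sem_def by (auto simp: fsem_subst_sk)
  then show "fsem M v g \<and> ex_close h M v"
    using fsem_agree_off[OF M'(1)] assms unfolding ex_close_def by blast
qed

lemma is_pMbpD:
  assumes "is_pMbp pmbp" and "ground \<phi>" and "wf \<phi>" and "models M \<phi>"
    and "pmbp U \<phi> M = (\<psi>, W)"
  shows "W \<subseteq> U" and "ground \<psi>" and "valid_imp (sem \<psi>) (ex_consts (U - W) (sem \<phi>))"
  using assms unfolding is_pMbp_def by (metis (lifting) case_prod_conv)+

lemma safety_problem_SK_disjoint: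
  assumes "safety_problem X Init Tr Bad"
  shows "SK \<inter> X = {}" and "fconsts Tr \<inter> SK = {}"
proof -
  have "\<forall>a\<in>X. is_Cn a" and Tr: "fconsts Tr \<subseteq> X \<union> Pr ` X"
    using assms unfolding safety_problem_def by auto
  then have "c \<notin> SK" if "c \<in> X \<union> Pr ` X" for c
    using that unfolding SK_def by force
  with Tr show "SK \<inter> X = {}" and "fconsts Tr \<inter> SK = {}" by blast+
qed

theorem lemma1:
  fixes X :: "const set" and Init Tr Bad :: fm
    and Q :: "(fm \<times> subst) set" and m :: fm and \<xi> :: subst
    and pmbp :: "const set \<Rightarrow> fm \<Rightarrow> interp \<Rightarrow> fm \<times> const set"
    and M :: interp and \<phi> \<psi> :: fm and U :: "const set" and \<sigma> :: subst
  assumes "safety_problem X Init Tr Bad"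
    and "is_frame X Q"
    and "proof_obligation X m \<xi>"
    and "is_pMbp pmbp"
    and "models_qi M Q"
    and "models M (Conj Tr (prime X (subst sk m)))"
    and "pmbp (Pr ` X \<union> SK) (Conj Tr (prime X (subst sk m))) M = (\<phi>, U)"
    and "is_abs U \<phi> \<psi> \<sigma>"
  shows "valid_imp (ex_close \<psi>)
           (ex_consts (Pr ` X) (\<lambda>M' v. fsem M' v Tr \<and> ex_close (prime X m) M' v))"
proof -
  let ?X' = "Pr ` X" and ?\<phi>\<^sub>0 = "Conj Tr (prime X (subst sk m))"
  have Tr: "ground Tr" "wf Tr" and m: "wf m" "fconsts m \<subseteq> X"
    using assms(1,3) unfolding safety_problem_def proof_obligation_def by auto
  have "ground ?\<phi>\<^sub>0" "wf ?\<phi>\<^sub>0"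
    using Tr m unfolding ground_def
    by (simp_all add: fvars_prime fvars_subst_sk wf_prime wf_subst_sk)
  note pMbp = is_pMbpD[OF assms(4) this assms(6,7)]
  have m'_SK: "fconsts (prime X m) \<inter> SK = {}"
    using fconsts_prime[OF m(2)] unfolding SK_def by auto
  note SK_X = safety_problem_SK_disjoint[OF assms(1)]
  have "valid_imp (ex_close \<psi>) (ex_consts U (sem \<phi>))"
    by (rule ex_close_abs[OF assms(8) pMbp(2)])
  also have "valid_imp \<dots> (ex_consts U (ex_consts (?X' \<union> SK - U) (sem ?\<phi>\<^sub>0)))"
    by (rule ex_consts_mono[OF pMbp(3)])
  also have "\<dots> = ex_consts ?X' (ex_consts SK (sem ?\<phi>\<^sub>0))"
    using pMbp(1) by (simp add: ex_consts_Un[symmetric] Un_absorb1)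
  also have "valid_imp \<dots> (ex_consts ?X' (\<lambda>M' v. fsem M' v Tr \<and> ex_close (prime X m) M' v))"
    unfolding prime_subst_sk[OF SK_X(1)]
    by (rule ex_consts_mono[OF ex_consts_SK_subst_sk[OF SK_X(2) m'_SK]])
  finally show ?thesis .
qed

end
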